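(* Let $\bm\sigma=\sigma_1\bm e_1+\dots+\sigma_r\bm e_r\in\mathbb{Z}^r$ be a changemaker vector with $\sigma_r>1$, let $L=\langle\bm\sigma\rangle^\perp\subseteq\mathbb{Z}^r$, and let $m>1$ be minimal such that $\sigma_m>1$. If $\bm z=\sum z_i\bm e_i\in L$ is irreducible, then $|z_m|\le\sigma_m$.
   Context: $\mathbb{Z}^r$ has the standard pairing. A changemaker vector is $\bm\sigma=\sum\sigma_i\bm e_i$ with $\sigma_1=1$ and $\sigma_{i-1}\le\sigma_i\le1+\sigma_1+\dots+\sigma_{i-1}$. A non-zero $v\in L$ is irreducible if whenever $v=x+y$ with $x,y\in L$ non-zero, $x\cdot y\le-1$. *)

theory Defs
  imports Main
begin

text \<open>Vectors of Z^r are modelled as functions nat => int supported on {1..r};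
  the coordinate e_i corresponds to index i.\<close>

definition zvec :: "nat \<Rightarrow> (nat \<Rightarrow> int) set" where
  "zvec r = {v. \<forall>i. i \<notin> {1..r} \<longrightarrow> v i = 0}"

definition pair :: "nat \<Rightarrow> (nat \<Rightarrow> int) \<Rightarrow> (nat \<Rightarrow> int) \<Rightarrow> int" where
  "pair r x y = (\<Sum>i=1..r. x i * y i)"

definition changemaker :: "nat \<Rightarrow> (nat \<Rightarrow> int) \<Rightarrow> bool" where
  "changemaker r \<sigma> \<longleftrightarrow> \<sigma> \<in> zvec r \<and> 1 \<le> r \<and> \<sigma> 1 = 1 \<and>
     (\<forall>i. 2 \<le> i \<and> i \<le> r \<longrightarrow> \<sigma> (i - 1) \<le> \<sigma> i \<and> \<sigma> i \<le> 1 + (\<Sum>j=1..i-1. \<sigma> j))"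

definition orth_lattice :: "nat \<Rightarrow> (nat \<Rightarrow> int) \<Rightarrow> (nat \<Rightarrow> int) set" where
  "orth_lattice r \<sigma> = {z \<in> zvec r. pair r z \<sigma> = 0}"

definition irreducible_in :: "nat \<Rightarrow> (nat \<Rightarrow> int) set \<Rightarrow> (nat \<Rightarrow> int) \<Rightarrow> bool" where
  "irreducible_in r L v \<longleftrightarrow> v \<in> L \<and> v \<noteq> (\<lambda>_. 0) \<and>
     (\<forall>x\<in>L. \<forall>y\<in>L. x \<noteq> (\<lambda>_. 0) \<and> y \<noteq> (\<lambda>_. 0) \<and> v = (\<lambda>i. x i + y i) \<longrightarrow> pair r x y \<le> -1)"

end

theory Submission
  imports Defs
begin

(* If z is irreducible then so is -z, so it suffices to show that z_m > s := sigma_m makes z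
   reducible: we exhibit x in L with x <> 0, x <> z and x . (z - x) >= 0, which splits z = x + (z - x).
   Since sigma_j = 1 for j < m, the signs of z_1, ..., z_(m-1) dictate x:
   - mixed signs, z_p < 0 < z_q: x = e_q - e_p;
   - all <= 0, z_p < 0: x = e_m - e_p - sum_(j in S) e_j with p in S and |S| = s - 1;
   - all >= 0, at least s of them zero: x = e_m - sum_(j in S) e_j over s of the zeros;
   - all >= 0, fewer zeros: let i > m be the first index with z_i <= 0 (it exists as z . sigma = 0).
     The changemaker property writes sigma_i - sigma_m = sum_(j in U) sigma_j with U below i, and
     x = e_m + sum_(j in U) e_j - e_i works since z_m >= s + 1 pays for z_i and the < s low zeros. *)

lemma changemaker_le_Suc_sum:
  assumes "changemaker r \<sigma>" and "1 \<le> p" and "p \<le> r"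
  shows "\<sigma> p \<le> 1 + (\<Sum>j=1..p-1. \<sigma> j)"
  using assms unfolding changemaker_def by (cases "p = 1") auto

lemma changemaker_mono:
  assumes "changemaker r \<sigma>" and "1 \<le> p" and "p \<le> q" and "q \<le> r"
  shows "\<sigma> p \<le> \<sigma> q"
  using \<open>p \<le> q\<close> \<open>q \<le> r\<close>
proof (induction q rule: dec_induct)
  case base
  then show ?case by simp
next
  case (step n)
  have "2 \<le> Suc n" and "Suc n \<le> r"
    using assms(2) step by auto
  then have "\<sigma> (Suc n - 1) \<le> \<sigma> (Suc n)"
    using assms(1) unfolding changemaker_def by blast
  then show ?case using step by simp
qed

lemma changemaker_pos:
  assumes "changemaker r \<sigma>" and "1 \<le> p" and "p \<le> r"
  shows "1 \<le> \<sigma> p"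
  using changemaker_mono[OF assms(1) order_refl assms(2,3)] assms(1)
  by (simp add: changemaker_def)

lemma changemaker_eq_1_below_first_gt_1:
  assumes "changemaker r \<sigma>" and "m \<le> r" and "\<forall>i. 1 < i \<and> i < m \<longrightarrow> \<not> (\<sigma> i > 1)"
    and "1 \<le> j" and "j < m"
  shows "\<sigma> j = 1"
proof -
  have "1 \<le> \<sigma> j" using changemaker_pos[OF assms(1)] assms(2,4,5) by simp
  moreover have "\<sigma> j \<le> 1"
  proof (cases "j = 1")
    case True
    with assms(1) show ?thesis by (simp add: changemaker_def)
  next
    case False
    with assms(3-5) show ?thesis by (simp add: not_less)
  qed
  ultimately show ?thesis by simp
qed

lemma changemaker_subset_sum:
  assumes "changemaker r \<sigma>" and "n \<le> r" and "0 \<le> N" and "N \<le> (\<Sum>j=1..n. \<sigma> j)"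
  shows "\<exists>U \<subseteq> {1..n}. sum \<sigma> U = N"
  using assms(2-)
proof (induction n arbitrary: N)
  case 0
  then show ?case by auto
next
  case (Suc n)
  show ?case
  proof (cases "N \<le> (\<Sum>j=1..n. \<sigma> j)")
    case True
    with Suc obtain U where "U \<subseteq> {1..n}" "sum \<sigma> U = N" by auto
    then show ?thesis by (intro exI[of _ U]) auto
  next
    case False
    have "\<sigma> (Suc n) \<le> 1 + (\<Sum>j=1..n. \<sigma> j)"
      using changemaker_le_Suc_sum[OF assms(1), of "Suc n"] Suc.prems by simp
    with False Suc.prems obtain U where U: "U \<subseteq> {1..n}" "sum \<sigma> U = N - \<sigma> (Suc n)"
      using Suc.IH[of "N - \<sigma> (Suc n)"] by (auto simp: sum.cl_ivl_Suc)
    then have "sum \<sigma> (insert (Suc n) U) = N"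
      by (subst sum.insert) (auto intro: finite_subset)
    with U show ?thesis by (intro exI[of _ "insert (Suc n) U"]) auto
  qed
qed

lemma orth_lattice_uminus:
  "z \<in> orth_lattice r \<sigma> \<Longrightarrow> (\<lambda>i. - z i) \<in> orth_lattice r \<sigma>"
  unfolding orth_lattice_def zvec_def pair_def by (auto simp: sum_negf)

lemma irreducible_in_orth_lattice_uminus:
  assumes "irreducible_in r (orth_lattice r \<sigma>) z"
  shows "irreducible_in r (orth_lattice r \<sigma>) (\<lambda>i. - z i)"
proof -
  have "pair r x y \<le> -1"
    if "x \<in> orth_lattice r \<sigma>" "y \<in> orth_lattice r \<sigma>" "x \<noteq> (\<lambda>_. 0)" "y \<noteq> (\<lambda>_. 0)"
      and "(\<lambda>i. - z i) = (\<lambda>i. x i + y i)" for x y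
  proof -
    have "(\<lambda>i. - x i) \<noteq> (\<lambda>_. 0)" "(\<lambda>i. - y i) \<noteq> (\<lambda>_. 0)"
      using that(3,4) by (auto simp: fun_eq_iff)
    moreover have "z = (\<lambda>i. - x i + - y i)"
    proof
      fix i
      show "z i = - x i + - y i" using fun_cong[OF that(5), of i] by simp
    qed
    ultimately have "pair r (\<lambda>i. - x i) (\<lambda>i. - y i) \<le> -1"
      using assms orth_lattice_uminus[OF that(1)] orth_lattice_uminus[OF that(2)]
      unfolding irreducible_in_def by blast
    then show ?thesis unfolding pair_def by simp
  qed
  with assms orth_lattice_uminus show ?thesis
    unfolding irreducible_in_def fun_eq_iff by auto
qed

lemma not_irreducible_if_pair_diff_nonneg:
  assumes x: "x \<in> orth_lattice r \<sigma>" and z: "z \<in> orth_lattice r \<sigma>"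
    and "x \<noteq> (\<lambda>_. 0)" and "x \<noteq> z" and "0 \<le> pair r x (\<lambda>i. z i - x i)"
  shows "\<not> irreducible_in r (orth_lattice r \<sigma>) z"
proof
  define y where "y = (\<lambda>i. z i - x i)"
  have "y \<in> orth_lattice r \<sigma>"
    using x z unfolding orth_lattice_def zvec_def pair_def y_def
    by (simp add: left_diff_distrib sum_subtractf)
  moreover have "y \<noteq> (\<lambda>_. 0)" "z = (\<lambda>i. x i + y i)"
    using \<open>x \<noteq> z\<close> by (force simp: y_def fun_eq_iff)+
  moreover assume "irreducible_in r (orth_lattice r \<sigma>) z"
  ultimately have "pair r x y \<le> -1"
    using x \<open>x \<noteq> (\<lambda>_. 0)\<close> unfolding irreducible_in_def by blast
  with assms(5) show False by (simp add: y_def)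
qed

lemma not_irreducible_if_termwise_bound:
  assumes "x \<in> orth_lattice r \<sigma>" and "z \<in> orth_lattice r \<sigma>"
    and "x \<noteq> (\<lambda>_. 0)" and "x \<noteq> z"
    and "\<And>j. h j \<le> x j * (z j - x j)" and "0 \<le> (\<Sum>j=1..r. h j)"
  shows "\<not> irreducible_in r (orth_lattice r \<sigma>) z"
proof (rule not_irreducible_if_pair_diff_nonneg[OF assms(1-4)])
  have "(\<Sum>j=1..r. h j) \<le> pair r x (\<lambda>i. z i - x i)"
    unfolding pair_def using assms(5) by (intro sum_mono)
  with assms(6) show "0 \<le> pair r x (\<lambda>i. z i - x i)" by linarith
qed

lemma orth_lattice_has_neg_coord:
  assumes "\<forall>j\<in>{1..r}. 0 < \<sigma> j" and z: "z \<in> orth_lattice r \<sigma>" and "0 < z k"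
  shows "\<exists>j\<in>{1..r}. z j < 0"
proof (rule ccontr)
  assume no_neg: "\<not> ?thesis"
  have "k \<in> {1..r}" using z \<open>0 < z k\<close> unfolding orth_lattice_def zvec_def by force
  then have "0 < (\<Sum>j=1..r. z j * \<sigma> j)"
    using assms no_neg by (intro sum_pos2[of _ k]) (auto simp: not_less less_imp_le)
  with z show False unfolding orth_lattice_def pair_def by simp
qed

locale changemaker_jump =
  fixes r m :: nat and \<sigma> :: "nat \<Rightarrow> int"
  assumes changemaker: "changemaker r \<sigma>"
    and one_less_m: "1 < m" and m_le_r: "m \<le> r" and jump: "1 < \<sigma> m"
    and below_jump: "\<And>j. 1 \<le> j \<Longrightarrow> j < m \<Longrightarrow> \<sigma> j = 1"
begin

lemma sum_below_jump:
  assumes "S \<subseteq> {1..<m}"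
  shows "sum \<sigma> S = int (card S)"
  using assms below_jump by (subst sum.cong[of S S \<sigma> "\<lambda>_. 1"]) auto

lemma jump_le_m: "\<sigma> m \<le> int m"
proof -
  have "{1..m-1} \<subseteq> {1..<m}" by auto
  then have "(\<Sum>j=1..m-1. \<sigma> j) = int m - 1"
    using sum_below_jump one_less_m by simp
  then show ?thesis
    using changemaker_le_Suc_sum[OF changemaker, of m] one_less_m m_le_r by simp
qed

lemma not_irreducible_if_low_signs_mixed:
  assumes z: "z \<in> orth_lattice r \<sigma>" and "z m \<noteq> 0"
    and p: "1 \<le> p" "p < m" "z p < 0" and q: "1 \<le> q" "q < m" "0 < z q"
  shows "\<not> irreducible_in r (orth_lattice r \<sigma>) z"
proof -
  define x :: "nat \<Rightarrow> int" where "x = (\<lambda>j. of_bool (j = q) - of_bool (j = p))"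
  have "p \<in> {1..r}" "q \<in> {1..r}" "p \<noteq> q" using p q m_le_r by auto
  have "pair r x \<sigma> = \<sigma> q - \<sigma> p"
    using \<open>p \<in> {1..r}\<close> \<open>q \<in> {1..r}\<close> unfolding pair_def x_def
    by (simp add: algebra_simps sum_subtractf)
  then have "x \<in> orth_lattice r \<sigma>"
    using p q below_jump \<open>p \<in> {1..r}\<close> \<open>q \<in> {1..r}\<close>
    unfolding orth_lattice_def zvec_def x_def by auto
  moreover have "0 \<le> pair r x (\<lambda>i. z i - x i)"
    unfolding pair_def using p q \<open>p \<noteq> q\<close> by (intro sum_nonneg) (auto simp: x_def)
  moreover have "x q \<noteq> 0" and "x m \<noteq> z m"
    using \<open>p \<noteq> q\<close> p q \<open>z m \<noteq> 0\<close> by (auto simp: x_def)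
  then have "x \<noteq> (\<lambda>_. 0)" and "x \<noteq> z" by auto
  ultimately show ?thesis using not_irreducible_if_pair_diff_nonneg z by blast
qed

lemma not_irreducible_if_nonpos_below:
  assumes z: "z \<in> orth_lattice r \<sigma>" and gt: "\<sigma> m < z m"
    and S: "S \<subseteq> {1..<m}" and P: "P \<subseteq> S"
    and nonpos: "\<forall>j\<in>S. z j \<le> 0" and neg: "\<forall>j\<in>P. z j < 0"
    and card: "int (card S + card P) = \<sigma> m"
  shows "\<not> irreducible_in r (orth_lattice r \<sigma>) z"
proof -
  define x :: "nat \<Rightarrow> int" where "x = (\<lambda>j. of_bool (j = m) - of_bool (j \<in> S) - of_bool (j \<in> P))"
  define h :: "nat \<Rightarrow> int"
    where "h = (\<lambda>j. of_bool (j = m) * (z m - 1) - of_bool (j \<in> S) - of_bool (j \<in> P))"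
  have "m \<notin> S" "S \<subseteq> {1..r}" "P \<subseteq> {1..r}" "m \<in> {1..r}"
    using S P m_le_r one_less_m by auto
  have "pair r x \<sigma> = \<sigma> m - sum \<sigma> S - sum \<sigma> P"
    using \<open>S \<subseteq> {1..r}\<close> \<open>P \<subseteq> {1..r}\<close> \<open>m \<in> {1..r}\<close> unfolding pair_def x_def
    by (simp add: algebra_simps sum.distrib sum_subtractf Int_absorb1)
  also have "\<dots> = 0"
    using card sum_below_jump[OF S] sum_below_jump[of P] S P by simp
  finally have "x \<in> orth_lattice r \<sigma>"
    using \<open>S \<subseteq> {1..r}\<close> \<open>P \<subseteq> {1..r}\<close> \<open>m \<in> {1..r}\<close>
    unfolding orth_lattice_def zvec_def x_def by auto
  moreover have "x m \<noteq> 0" and "x m \<noteq> z m"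
    using \<open>m \<notin> S\<close> P gt jump by (auto simp: x_def)
  then have "x \<noteq> (\<lambda>_. 0)" and "x \<noteq> z" by auto
  ultimately show ?thesis
  proof (rule not_irreducible_if_termwise_bound[OF _ z, of _ h])
    show "h j \<le> x j * (z j - x j)" for j
      using \<open>m \<notin> S\<close> P nonpos neg by (auto simp: x_def h_def)
    have "(\<Sum>j=1..r. h j) = z m - 1 - int (card S + card P)"
      unfolding h_def using \<open>m \<in> {1..r}\<close> \<open>S \<subseteq> {1..r}\<close> \<open>P \<subseteq> {1..r}\<close>
      by (simp add: sum_subtractf Int_absorb1)
    with card gt show "0 \<le> (\<Sum>j=1..r. h j)" by linarith
  qed
qed

lemma gap_is_subset_sum:
  assumes "m < i" and "i \<le> r"
  obtains U where "U \<subseteq> {1..i-1}" and "sum \<sigma> U = \<sigma> i - \<sigma> m"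
proof -
  have "\<sigma> m \<le> \<sigma> i"
    using changemaker_mono[OF changemaker, of m i] assms one_less_m by simp
  moreover have "\<sigma> i \<le> 1 + (\<Sum>j=1..i-1. \<sigma> j)"
    using changemaker_le_Suc_sum[OF changemaker, of i] assms by simp
  ultimately have "0 \<le> \<sigma> i - \<sigma> m" and "\<sigma> i - \<sigma> m \<le> (\<Sum>j=1..i-1. \<sigma> j)"
    using jump by linarith+
  moreover have "i - 1 \<le> r" using assms by simp
  ultimately show ?thesis
    using changemaker_subset_sum[OF changemaker] that by blast
qed

lemma first_nonpos_after_jump:
  assumes z: "z \<in> orth_lattice r \<sigma>" and "0 < z m"
    and low: "\<And>j. 1 \<le> j \<Longrightarrow> j < m \<Longrightarrow> 0 \<le> z j"
  obtains i where "m < i" and "i \<le> r" and "z i \<le> 0" and "\<And>j. m < j \<Longrightarrow> j < i \<Longrightarrow> 0 < z j"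
proof -
  have "\<forall>j\<in>{1..r}. 0 < \<sigma> j"
    using changemaker_pos[OF changemaker] by fastforce
  then obtain k where k: "k \<in> {1..r}" "z k < 0"
    using orth_lattice_has_neg_coord[OF _ z \<open>0 < z m\<close>] by blast
  with low \<open>0 < z m\<close> have "m < k"
    by (metis atLeastAtMost_iff le_less_trans less_le_not_le linorder_neqE_nat)
  define i where "i = (LEAST i. m < i \<and> z i \<le> 0)"
  have "m < i \<and> z i \<le> 0" "i \<le> k"
    using LeastI[of "\<lambda>i. m < i \<and> z i \<le> 0" k] Least_le[of "\<lambda>i. m < i \<and> z i \<le> 0" k]
      \<open>m < k\<close> k
    unfolding i_def by auto
  moreover have "0 < z j" if "m < j" "j < i" for j
    using not_less_Least[of j "\<lambda>i. m < i \<and> z i \<le> 0"] that unfolding i_def by auto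
  ultimately show ?thesis using that k by auto
qed

lemma not_irreducible_if_first_nonpos_after_jump:
  assumes z: "z \<in> orth_lattice r \<sigma>" and gt: "\<sigma> m < z m"
    and low: "\<And>j. 1 \<le> j \<Longrightarrow> j < m \<Longrightarrow> 0 \<le> z j"
    and few_zeros: "int (card {j\<in>{1..<m}. z j = 0}) < \<sigma> m"
    and i: "m < i" "i \<le> r" "z i \<le> 0" and between: "\<And>j. m < j \<Longrightarrow> j < i \<Longrightarrow> 0 < z j"
  shows "\<not> irreducible_in r (orth_lattice r \<sigma>) z"
proof -
  obtain U where U: "U \<subseteq> {1..i-1}" and sum_U: "sum \<sigma> U = \<sigma> i - \<sigma> m"
    using gap_is_subset_sum i by blast
  define x :: "nat \<Rightarrow> int" where "x = (\<lambda>j. of_bool (j = m) + of_bool (j \<in> U) - of_bool (j = i))"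
  define Z where "Z = {j\<in>{1..<m}. z j = 0}"
  define h :: "nat \<Rightarrow> int"
    where "h = (\<lambda>j. of_bool (j = m) * (z m - 1) - of_bool (j = i) - of_bool (j \<in> Z))"
  have "U \<subseteq> {1..r}" "Z \<subseteq> {1..r}" "m \<in> {1..r}" "i \<in> {1..r}" "i \<notin> U"
    using U i m_le_r one_less_m unfolding Z_def by (auto simp: subset_iff)
  have "pair r x \<sigma> = \<sigma> m + sum \<sigma> U - \<sigma> i"
    using \<open>U \<subseteq> {1..r}\<close> \<open>m \<in> {1..r}\<close> \<open>i \<in> {1..r}\<close> unfolding pair_def x_def
    by (simp add: algebra_simps sum.distrib sum_subtractf Int_absorb1)
  then have "x \<in> orth_lattice r \<sigma>"
    using sum_U \<open>U \<subseteq> {1..r}\<close> \<open>m \<in> {1..r}\<close> \<open>i \<in> {1..r}\<close>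
    unfolding orth_lattice_def zvec_def x_def by auto
  moreover have "x i \<noteq> 0" and "x m \<noteq> z m"
    using \<open>i \<notin> U\<close> i gt jump by (auto simp: x_def)
  then have "x \<noteq> (\<lambda>_. 0)" and "x \<noteq> z" by auto
  ultimately show ?thesis
  proof (rule not_irreducible_if_termwise_bound[OF _ z, of _ h])
    show "h j \<le> x j * (z j - x j)" for j
    proof (cases "j = m")
      case True
      \<comment> \<open>x m is 2 if m \<in> U and 1 otherwise\<close>
      have "z m - 1 \<le> 2 * (z m - 2)" using gt jump by simp
      with True \<open>i \<notin> U\<close> i show ?thesis by (auto simp: x_def h_def Z_def)
    next
      case False
      consider "j = i" | "j \<in> U" "j < m" | "j \<in> U" "m < j" | "j \<noteq> i" "j \<notin> U"
        using False by linarith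
      then show ?thesis
      proof cases
        case 2
        with U have "1 \<le> j" by auto
        with 2 low[of j] show ?thesis by (cases "z j = 0") (auto simp: x_def h_def Z_def)
      next
        case 3
        with U i have "j < i" by auto
        with 3 between[of j] show ?thesis by (auto simp: x_def h_def Z_def)
      qed (use False i \<open>i \<notin> U\<close> in \<open>auto simp: x_def h_def Z_def\<close>)
    qed
    have "(\<Sum>j=1..r. h j) = z m - 2 - int (card Z)"
      unfolding h_def using \<open>m \<in> {1..r}\<close> \<open>i \<in> {1..r}\<close> \<open>Z \<subseteq> {1..r}\<close>
      by (simp add: sum_subtractf Int_absorb1)
    with few_zeros gt show "0 \<le> (\<Sum>j=1..r. h j)"
      unfolding Z_def by linarith
  qed
qed

lemma not_irreducible_if_gt_jump:
  assumes z: "z \<in> orth_lattice r \<sigma>" and gt: "\<sigma> m < z m"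
  shows "\<not> irreducible_in r (orth_lattice r \<sigma>) z"
proof -
  consider (mixed) p q where "1 \<le> p" "p < m" "z p < 0" "1 \<le> q" "q < m" "0 < z q"
    | (nonpos) p where "1 \<le> p" "p < m" "z p < 0" "\<And>j. 1 \<le> j \<Longrightarrow> j < m \<Longrightarrow> z j \<le> 0"
    | (nonneg) "\<And>j. 1 \<le> j \<Longrightarrow> j < m \<Longrightarrow> 0 \<le> z j"
    by (metis not_le)
  then show ?thesis
  proof cases
    case mixed
    with gt jump show ?thesis using not_irreducible_if_low_signs_mixed[OF z] by simp
  next
    case nonpos
    have "nat (\<sigma> m) - 2 \<le> card ({1..<m} - {p})"
      using nonpos jump_le_m by simp
    then obtain T where T: "T \<subseteq> {1..<m} - {p}" "card T = nat (\<sigma> m) - 2"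
      by (meson obtain_subset_with_card_n)
    have "finite T" and "p \<notin> T" using T(1) finite_subset by auto
    with T jump have "int (card (insert p T) + card {p}) = \<sigma> m" by simp
    with nonpos T show ?thesis
      by (intro not_irreducible_if_nonpos_below[OF z gt, of "insert p T" "{p}"]) auto
  next
    case nonneg
    define Z where "Z = {j\<in>{1..<m}. z j = 0}"
    show ?thesis
    proof (cases "\<sigma> m \<le> int (card Z)")
      case True
      then obtain S where "S \<subseteq> Z" "card S = nat (\<sigma> m)"
        by (metis nat_le_iff obtain_subset_with_card_n)
      with jump show ?thesis
        by (intro not_irreducible_if_nonpos_below[OF z gt, of S "{}"]) (auto simp: Z_def)
    next
      case False
      obtain i where "m < i" "i \<le> r" "z i \<le> 0" "\<And>j. m < j \<Longrightarrow> j < i \<Longrightarrow> 0 < z j"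
        using first_nonpos_after_jump[OF z _ nonneg] gt jump by auto
      with False show ?thesis
        using not_irreducible_if_first_nonpos_after_jump[OF z gt nonneg] unfolding Z_def by simp
    qed
  qed
qed

end

theorem lemma7p3:
  fixes r m :: nat and \<sigma> z :: "nat \<Rightarrow> int"
  assumes "changemaker r \<sigma>"
    and "\<sigma> r > 1"
    and "1 < m" and "m \<le> r" and "\<sigma> m > 1"
    and "\<forall>i. 1 < i \<and> i < m \<longrightarrow> \<not> (\<sigma> i > 1)"
    and "irreducible_in r (orth_lattice r \<sigma>) z"
  shows "\<bar>z m\<bar> \<le> \<sigma> m"
proof -
  interpret changemaker_jump r m \<sigma>
    using assms changemaker_eq_1_below_first_gt_1[OF assms(1,4,6)] by unfold_locales auto
  have z: "z \<in> orth_lattice r \<sigma>" using assms(7) unfolding irreducible_in_def by simp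
  show ?thesis
  proof (rule ccontr)
    assume "\<not> \<bar>z m\<bar> \<le> \<sigma> m"
    then have "\<sigma> m < z m \<or> \<sigma> m < - z m" by arith
    then show False
      using not_irreducible_if_gt_jump[OF z] not_irreducible_if_gt_jump[OF orth_lattice_uminus[OF z]]
        irreducible_in_orth_lattice_uminus[OF assms(7)] assms(7) by auto
  qed
qed

end
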